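(* If a sign string $S$ and a state string $J$ of length $n$ correspond to a dominant lattice path, then the growth algorithm applied to $(S,J)$ does not terminate until the sign and state strings have length $0$.
   Context: A sign string is $S=(s_1,\dots,s_n)\in\{+,-\}^n$ and a state string is $J=(j_1,\dots,j_n)\in\{-1,0,1\}^n$. Weights: let $\alpha_1,\alpha_2$ be the simple roots and $\mu^+,\mu^-$ the fundamental weights of $\mathfrak{sl}(3)$; put $\mathrm{wt}(e^+_1)=\mu^+$, $\mathrm{wt}(e^+_0)=\mu^+-\alpha_1$, $\mathrm{wt}(e^+_{-1})=\mu^+-\alpha_1-\alpha_2$, $\mathrm{wt}(e^-_1)=\mu^-$, $\mathrm{wt}(e^-_0)=\mu^--\alpha_2$, $\mathrm{wt}(e^-_{-1})=\mu^--\alpha_1-\alpha_2$. The pair $(S,J)$ determines the lattice path $\pi_0=0$, $\pi_k=\pi_{k-1}+\mathrm{wt}(e^{s_k}_{j_k})$; it is dominant if every $\pi_k$ is a nonnegative integral combination of $\mu^+,\mu^-$ and $\pi_n=0$. The growth algorithm builds an oriented planar graph downward from $n$ parallel strands, keeping a current pair (sign string, state string). A replacement acts on two adjacent positions $k,k+1$ with current signs $(s,s')$ and states $(j,j')$: (a) If $s'\ne s$: if $(j,j')=(1,0)$, $(0,0)$ or $(0,-1)$, attach an "H" (two trivalent vertices joined by a horizontal edge, each joined to its strand above and a new strand below); the new signs are $(s',s)$ and the new states respectively $(0,1)$, $(-1,1)$, $(-1,0)$. If $(j,j')=(1,-1)$, join the two strands by a cup and delete both positions. (b) If $s'=s$: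 if $(j,j')=(1,0)$, $(0,-1)$ or $(1,-1)$, attach a "Y" (the two strands meet at a trivalent vertex whose third edge continues downward); the two positions are replaced by one position with sign opposite to $s$ and state respectively $1$, $-1$, $0$. The algorithm repeatedly applies some applicable replacement and stops when none applies. *)

theory Defs
  imports Main "HOL-Library.Product_Plus"
begin

text \<open>Weights of sl(3) are written in the basis of fundamental weights:
  a weight is a pair (a,b) meaning a*mu_plus + b*mu_minus.
  The simple roots in this basis are given by the Cartan matrix.\<close>

definition mu_plus :: "int \<times> int" where "mu_plus = (1, 0)"
definition mu_minus :: "int \<times> int" where "mu_minus = (0, 1)"
definition alpha1 :: "int \<times> int" where "alpha1 = (2, -1)"
definition alpha2 :: "int \<times> int" where "alpha2 = (-1, 2)"

text \<open>Signs: True = +, False = -. States are integers in {-1,0,1}.\<close>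

definition wt :: "bool \<Rightarrow> int \<Rightarrow> int \<times> int" where
  "wt s j =
    (if s then
       (if j = 1 then mu_plus
        else if j = 0 then mu_plus - alpha1
        else mu_plus - alpha1 - alpha2)
     else
       (if j = 1 then mu_minus
        else if j = 0 then mu_minus - alpha2
        else mu_minus - alpha1 - alpha2))"

definition lpath :: "bool list \<Rightarrow> int list \<Rightarrow> nat \<Rightarrow> int \<times> int" where
  "lpath S J k = sum_list (map2 wt (take k S) (take k J))"

definition dominant :: "bool list \<Rightarrow> int list \<Rightarrow> bool" where
  "dominant S J \<longleftrightarrow>
     length S = length J \<and> set J \<subseteq> {-1, 0, 1} \<and>
     (\<forall>k \<le> length S. fst (lpath S J k) \<ge> 0 \<and> snd (lpath S J k) \<ge> 0) \<and>
     lpath S J (length S) = 0"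

inductive grow_step :: "bool list \<times> int list \<Rightarrow> bool list \<times> int list \<Rightarrow> bool" where
  H: "\<lbrakk> length S1 = length J1; s' \<noteq> s;
        (j, j', k, k') \<in> {(1, 0, 0, 1), (0, 0, -1, 1), (0, -1, -1, 0)} \<rbrakk>
      \<Longrightarrow> grow_step (S1 @ s # s' # S2, J1 @ j # j' # J2) (S1 @ s' # s # S2, J1 @ k # k' # J2)"
| cup: "\<lbrakk> length S1 = length J1; s' \<noteq> s \<rbrakk>
      \<Longrightarrow> grow_step (S1 @ s # s' # S2, J1 @ 1 # (-1) # J2) (S1 @ S2, J1 @ J2)"
| Y: "\<lbrakk> length S1 = length J1;
        (j, j', k) \<in> {(1, 0, 1), (0, -1, -1), (1, -1, 0)} \<rbrakk>
      \<Longrightarrow> grow_step (S1 @ s # s # S2, J1 @ j # j' # J2) (S1 @ (\<not> s) # S2, J1 @ k # J2)"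

end

(*
  A replacement of the growth algorithm keeps the sum of the weights of the two
  positions it acts on (or removes a pair of total weight 0), so the lattice path
  changes only in the one intermediate point between the two positions, and a case
  check shows that this point stays dominant: dominance is invariant.  Every pair of
  adjacent states j > j' admits an H, a cup or a Y, so in a terminal configuration
  the states are weakly increasing.  The first step of a dominant path must have
  state 1, so all states are 1; but the coordinate sum of wt s j is j, so the
  states of a closed path sum to 0, which forces the strings to be empty.
*)
theory Submission
  imports Defs
begin

definition dominant_weight :: "int \<times> int \<Rightarrow> bool" where
  "dominant_weight q \<longleftrightarrow> 0 \<le> fst q \<and> 0 \<le> snd q"

fun dominant_from :: "int \<times> int \<Rightarrow> (bool \<times> int) list \<Rightarrow> bool" where
  "dominant_from p [] \<longleftrightarrow> p = 0"
| "dominant_from p ((s, j) # xs) \<longleftrightarrow> dominant_weight p \<and> dominant_from (p + wt s j) xs"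

lemma dominant_from_imp_dominant_weight: "dominant_from p xs \<Longrightarrow> dominant_weight p"
  by (cases xs) (auto simp: dominant_weight_def)

lemma all_le_Suc_conv: "(\<forall>k\<le>Suc n. P k) \<longleftrightarrow> P 0 \<and> (\<forall>k\<le>n. P (Suc k))"
  using All_less_Suc2[of "Suc n" P] by (simp add: less_Suc_eq_le)

lemma dominant_from_iff_prefix_sums:
  "dominant_from p xs \<longleftrightarrow>
     (\<forall>k\<le>length xs. dominant_weight (p + sum_list (map (case_prod wt) (take k xs)))) \<and>
     p + sum_list (map (case_prod wt) xs) = 0"
proof (induction xs arbitrary: p)
  case Nil
  then show ?case by (auto simp: dominant_weight_def)
next
  case (Cons x xs)
  then show ?case
    by (cases x) (simp add: all_le_Suc_conv add.assoc)
qed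

lemma dominant_iff_dominant_from:
  "dominant S J \<longleftrightarrow> length S = length J \<and> set J \<subseteq> {-1, 0, 1} \<and> dominant_from 0 (zip S J)"
  by (auto simp: dominant_def dominant_from_iff_prefix_sums lpath_def take_zip dominant_weight_def)

lemma dominant_from_replace_infix:
  assumes "dominant_from p (xs @ u @ ys)"
    and "\<And>q. dominant_from q (u @ ys) \<Longrightarrow> dominant_from q (v @ ys)"
  shows "dominant_from p (xs @ v @ ys)"
  using assms(1)
proof (induction xs arbitrary: p)
  case Nil
  then show ?case using assms(2) by simp
next
  case (Cons x xs)
  then show ?case by (cases x) simp
qed

lemmas wt_simps = wt_def mu_plus_def mu_minus_def alpha1_def alpha2_def

lemma dominant_from_H:
  assumes "s' \<noteq> s" "(j, j', k, k') \<in> {(1, 0, 0, 1), (0, 0, -1, 1), (0, -1, -1, 0)}"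
    and "dominant_from q ((s, j) # (s', j') # ys)"
  shows "dominant_from q ((s', k) # (s, k') # ys)"
proof -
  \<comment> \<open>Both pairs have the same total weight, so only the new middle point needs a check.\<close>
  have "dominant_weight (q + wt s j + wt s' j')"
    using assms(3) by (auto dest: dominant_from_imp_dominant_weight)
  then show ?thesis
    using assms by (cases s; cases s'; auto simp: wt_simps dominant_weight_def add.assoc)
qed

lemma dominant_from_cup:
  assumes "s' \<noteq> s" "dominant_from q ((s, 1) # (s', -1) # ys)"
  shows "dominant_from q ys"
  using assms by (cases s; cases s'; simp add: wt_simps add.assoc zero_prod_def[symmetric])

lemma dominant_from_Y:
  assumes "(j, j', k) \<in> {(1, 0, 1), (0, -1, -1), (1, -1, 0)}"
    and "dominant_from q ((s, j) # (s, j') # ys)"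
  shows "dominant_from q ((\<not> s, k) # ys)"
  using assms by (cases s; auto simp: wt_simps add.assoc)

lemma dominant_replace_infix:
  assumes "dominant (S1 @ U @ S2) (J1 @ V @ J2)"
    and "length S1 = length J1" "length U = length V" "length U' = length V'"
    and "set V' \<subseteq> {-1, 0, 1}"
    and "\<And>q ys. dominant_from q (zip U V @ ys) \<Longrightarrow> dominant_from q (zip U' V' @ ys)"
  shows "dominant (S1 @ U' @ S2) (J1 @ V' @ J2)"
proof -
  have "dominant_from 0 (zip S1 J1 @ zip U V @ zip S2 J2)"
    using assms(1-3) by (simp add: dominant_iff_dominant_from)
  then have "dominant_from 0 (zip S1 J1 @ zip U' V' @ zip S2 J2)"
    using dominant_from_replace_infix assms(6) by blast
  then show ?thesis
    using assms(1-5) by (auto simp: dominant_iff_dominant_from)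
qed

lemma grow_step_preserves_dominant:
  "grow_step c d \<Longrightarrow> case_prod dominant c \<Longrightarrow> case_prod dominant d"
proof (induction rule: grow_step.induct)
  case (H S1 J1 s' s j j' k k' S2 J2)
  have "dominant (S1 @ [s', s] @ S2) (J1 @ [k, k'] @ J2)"
  proof (rule dominant_replace_infix)
    show "dominant (S1 @ [s, s'] @ S2) (J1 @ [j, j'] @ J2)"
      using H.prems by simp
    show "set [k, k'] \<subseteq> {-1, 0, 1}"
      using H.hyps(3) by auto
    show "dominant_from q (zip [s', s] [k, k'] @ ys)"
      if "dominant_from q (zip [s, s'] [j, j'] @ ys)" for q ys
      using dominant_from_H[OF H.hyps(2,3)] that by (simp del: dominant_from.simps)
  qed (use H.hyps(1) in simp_all)
  then show ?case by simp
next
  case (cup S1 J1 s' s S2 J2)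
  have "dominant (S1 @ [] @ S2) (J1 @ [] @ J2)"
  proof (rule dominant_replace_infix)
    show "dominant (S1 @ [s, s'] @ S2) (J1 @ [1, -1] @ J2)"
      using cup.prems by simp
    show "dominant_from q (zip [] [] @ ys)"
      if "dominant_from q (zip [s, s'] [1, -1] @ ys)" for q ys
      using dominant_from_cup[OF cup.hyps(2)] that by (simp del: dominant_from.simps)
  qed (use cup.hyps(1) in simp_all)
  then show ?case by simp
next
  case (Y S1 J1 j j' k s S2 J2)
  have "dominant (S1 @ [\<not> s] @ S2) (J1 @ [k] @ J2)"
  proof (rule dominant_replace_infix)
    show "dominant (S1 @ [s, s] @ S2) (J1 @ [j, j'] @ J2)"
      using Y.prems by simp
    show "set [k] \<subseteq> {-1, 0, 1}"
      using Y.hyps(2) by auto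
    show "dominant_from q (zip [\<not> s] [k] @ ys)"
      if "dominant_from q (zip [s, s] [j, j'] @ ys)" for q ys
      using dominant_from_Y[OF Y.hyps(2)] that by (simp del: dominant_from.simps)
  qed (use Y.hyps(1) in simp_all)
  then show ?case by simp
qed

lemma rtranclp_grow_step_preserves_dominant:
  assumes "grow_step\<^sup>*\<^sup>* (S, J) (S', J')" "dominant S J"
  shows "dominant S' J'"
  using assms
  by (induction rule: rtranclp_induct2) (auto dest: grow_step_preserves_dominant)

lemma grow_step_at_descent:
  assumes "length S1 = length J1" "j \<in> {-1, 0, 1}" "j' \<in> {-1, 0, 1}" "j' < j"
  shows "\<exists>c. grow_step (S1 @ s # s' # S2, J1 @ j # j' # J2) c"
proof -
  have descent: "(j, j') \<in> {(1, 0), (0, -1), (1, -1)}"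
    using assms(2-4) by auto
  show ?thesis
  proof (cases "s' = s")
    case True
    then show ?thesis
      using descent grow_step.Y[OF assms(1), of j j' _ s S2 J2] by blast
  next
    case False
    then show ?thesis
      using descent grow_step.H[OF assms(1), of s' s j j' _ _ S2 J2]
        grow_step.cup[OF assms(1), of s' s S2 J2] by blast
  qed
qed

lemma sorted_if_no_grow_step:
  assumes "\<nexists>c. grow_step (S, J) c" "length S = length J" "set J \<subseteq> {-1, 0, 1}"
  shows "sorted J"
  unfolding sorted_iff_nth_Suc
proof (intro allI impI)
  fix i
  assume i: "Suc i < length J"
  have split: "take i xs @ xs ! i # xs ! Suc i # drop (Suc (Suc i)) xs = xs"
    if "Suc i < length xs" for xs :: "'a list"
    using that by (simp add: Cons_nth_drop_Suc)
  have "J ! i \<in> set J" "J ! Suc i \<in> set J"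
    using i by auto
  then have "J ! i \<in> {-1, 0, 1}" "J ! Suc i \<in> {-1, 0, 1}"
    using assms(3) by blast+
  moreover have "length (take i S) = length (take i J)"
    using assms(2) by simp
  ultimately have "J ! Suc i < J ! i \<Longrightarrow> \<exists>c. grow_step (S, J) c"
    using grow_step_at_descent[of "take i S" "take i J" "J ! i" "J ! Suc i" "S ! i" "S ! Suc i"
        "drop (Suc (Suc i)) S" "drop (Suc (Suc i)) J"]
    unfolding split[of S, OF i[unfolded assms(2)[symmetric]]] split[OF i] by blast
  then show "J ! i \<le> J ! Suc i"
    using assms(1) by fastforce
qed

lemma wt_coordinate_sum: "j \<in> {-1, 0, 1} \<Longrightarrow> fst (wt s j) + snd (wt s j) = j"
  by (cases s) (auto simp: wt_simps)

lemma dominant_from_state_sum: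
  "dominant_from p xs \<Longrightarrow> set (map snd xs) \<subseteq> {-1, 0, 1} \<Longrightarrow>
    fst p + snd p + sum_list (map snd xs) = 0"
proof (induction xs arbitrary: p)
  case (Cons x xs)
  obtain s j where x: "x = (s, j)"
    by fastforce
  have "fst (p + wt s j) + snd (p + wt s j) + sum_list (map snd xs) = 0"
    using Cons.IH[of "p + wt s j"] Cons.prems x by simp
  moreover have "fst (wt s j) + snd (wt s j) = j"
    using Cons.prems x by (simp add: wt_coordinate_sum)
  ultimately show ?case
    using x by simp
qed simp

lemma dominant_first_state:
  assumes "dominant_from 0 ((s, j) # xs)" "j \<in> {-1, 0, 1}"
  shows "j = 1"
proof -
  have "dominant_from (wt s j) xs"
    using assms(1) by simp
  then have "dominant_weight (wt s j)"
    by (rule dominant_from_imp_dominant_weight)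
  then show ?thesis
    using assms(2) by (cases s) (auto simp: wt_simps dominant_weight_def)
qed

lemma dominant_sorted_imp_Nil:
  assumes "dominant S J" "sorted J"
  shows "J = []"
proof (rule ccontr)
  assume "J \<noteq> []"
  moreover have "length S = length J"
    using assms(1) by (simp add: dominant_def)
  ultimately obtain s j S1 J1 where SJ: "S = s # S1" "J = j # J1"
    by (cases S; cases J) auto
  have closed: "dominant_from 0 (zip S J)" and states: "set J \<subseteq> {-1, 0, 1}"
    using assms(1) by (simp_all add: dominant_iff_dominant_from)
  have "map snd (zip S J) = J"
    using assms(1) by (simp add: dominant_def)
  then have "sum_list J = 0"
    using dominant_from_state_sum[OF closed] states by simp
  moreover have "j = 1"
    using closed states SJ by (intro dominant_first_state[of s j "zip S1 J1"]) simp_all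
  then have "0 \<le> sum_list J1"
    using assms(2) SJ by (intro sum_list_nonneg) force
  with \<open>j = 1\<close> have "0 < sum_list J"
    using SJ by simp
  ultimately show False
    by simp
qed

theorem lemma4:
  fixes S S' :: "bool list" and J J' :: "int list"
  assumes "dominant S J"
    and "grow_step\<^sup>*\<^sup>* (S, J) (S', J')"
    and "\<not> (\<exists>c. grow_step (S', J') c)"
  shows "S' = [] \<and> J' = []"
proof -
  have dom: "dominant S' J'"
    using rtranclp_grow_step_preserves_dominant assms(1,2) by blast
  then have "sorted J'"
    using sorted_if_no_grow_step[OF assms(3)] unfolding dominant_def by blast
  then have "J' = []"
    using dominant_sorted_imp_Nil dom by blast
  then show ?thesis
    using dom by (simp add: dominant_def)
qed

end
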